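(* Let $(G,\alpha)$ be a finite Hom-group and $H\preceq G$. For all $x,y\in G$, if $xH\cap yH\neq\emptyset$ then $xH=yH$, where $gH=\{gh:h\in H\}$.
   Context: A Hom-group is a tuple $(G,\mu,1,\alpha)$ where $G$ is a set, $\mu:G\times G\to G$ is a binary operation written $\mu(g,h)=gh$, $1\in G$ is a distinguished element, and $\alpha:G\to G$ is a bijection, such that: (1) Hom-associativity: $\alpha(g)(hk)=(gh)\alpha(k)$ for all $g,h,k\in G$; (2) $\alpha(gk)=\alpha(g)\alpha(k)$ for all $g,k$; (3) Hom-unitality: $g1=1g=\alpha(g)$ for all $g$, and $\alpha(1)=1$; (4) for every $g\in G$ there exists $g^{-1}\in G$ with $gg^{-1}=g^{-1}g=1$ (such an inverse is unique). A Hom-subgroup of $(G,\alpha)$ is a subset $H\subseteq G$ such that $H$, with the restriction of the multiplication of $G$, the element $1$, and the restriction of $\alpha$, is itself a Hom-group (in particular $1\in H$, $H$ is closed under multiplication and inverses, and $\alpha$ restricts to a bijection $H\to H$). We write $H\preceq G$. *)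

theory Defs
  imports Main
begin

definition hom_group :: "'a set \<Rightarrow> ('a \<Rightarrow> 'a \<Rightarrow> 'a) \<Rightarrow> 'a \<Rightarrow> ('a \<Rightarrow> 'a) \<Rightarrow> bool" where
  "hom_group G mu e alpha \<longleftrightarrow>
     (\<forall>g\<in>G. \<forall>h\<in>G. mu g h \<in> G) \<and> e \<in> G \<and> bij_betw alpha G G \<and>
     (\<forall>g\<in>G. \<forall>h\<in>G. \<forall>k\<in>G. mu (alpha g) (mu h k) = mu (mu g h) (alpha k)) \<and>
     (\<forall>g\<in>G. \<forall>k\<in>G. alpha (mu g k) = mu (alpha g) (alpha k)) \<and>
     (\<forall>g\<in>G. mu g e = alpha g \<and> mu e g = alpha g) \<and> alpha e = e \<and>
     (\<forall>g\<in>G. \<exists>g'\<in>G. mu g g' = e \<and> mu g' g = e)"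

definition hom_subgroup :: "'a set \<Rightarrow> 'a set \<Rightarrow> ('a \<Rightarrow> 'a \<Rightarrow> 'a) \<Rightarrow> 'a \<Rightarrow> ('a \<Rightarrow> 'a) \<Rightarrow> bool" where
  "hom_subgroup H G mu e alpha \<longleftrightarrow> H \<subseteq> G \<and> hom_group H mu e alpha"

definition left_coset :: "('a \<Rightarrow> 'a \<Rightarrow> 'a) \<Rightarrow> 'a \<Rightarrow> 'a set \<Rightarrow> 'a set" where
  "left_coset mu x H = (\<lambda>h. mu x h) ` H"

end

theory Submission
  imports Defs
begin

text \<open>Translating the coset \<open>x H\<close> by the twisting map gives \<open>\<alpha>(x) H\<close>, and Hom-associativity
  shows \<open>\<alpha>(x) H = (x h) H\<close> for every \<open>h \<in> H\<close>, because \<open>h H = H\<close> and \<open>\<alpha>(H) = H\<close>.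
  Hence a common element \<open>x h\<^sub>1 = y h\<^sub>2\<close> forces \<open>\<alpha>(x H) = \<alpha>(y H)\<close>, and injectivity of
  \<open>\<alpha>\<close> gives \<open>x H = y H\<close>.\<close>

lemma hom_group_left_coset_self:
  assumes hg: "hom_group H mu e alpha" and a: "a \<in> H"
  shows "left_coset mu a H = H"
proof
  from hg have cl: "\<forall>g\<in>H. \<forall>h\<in>H. mu g h \<in> H" and bij: "bij_betw alpha H H"
    and assoc: "\<forall>g\<in>H. \<forall>h\<in>H. \<forall>k\<in>H. mu (alpha g) (mu h k) = mu (mu g h) (alpha k)"
    and unit: "\<forall>g\<in>H. mu e g = alpha g"
    and inv: "\<forall>g\<in>H. \<exists>g'\<in>H. mu g g' = e \<and> mu g' g = e"
    unfolding hom_group_def by auto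
  show "left_coset mu a H \<subseteq> H"
    using cl a unfolding left_coset_def by auto
  show "H \<subseteq> left_coset mu a H"
  proof
    \<comment> \<open>Witness: for \<open>a = \<alpha> b\<close> and \<open>h = \<alpha> (\<alpha> m)\<close>, Hom-associativity gives \<open>a (b\<inverse> m) = (b b\<inverse>) \<alpha> m = h\<close>.\<close>
    fix h assume h: "h \<in> H"
    have aH: "alpha ` H = H" using bij by (simp add: bij_betw_def)
    obtain b where b: "b \<in> H" "alpha b = a" using a aH by force
    obtain m1 where m1: "m1 \<in> H" "alpha m1 = h" using h aH by force
    obtain m where m: "m \<in> H" "alpha (alpha m) = h" using m1 aH by force
    obtain b' where b': "b' \<in> H" "mu b b' = e" using inv b(1) by blast
    have "mu a (mu b' m) = mu (mu b b') (alpha m)"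
      using assoc b b' m(1) by metis
    also have "\<dots> = h" using b'(2) unit m aH by auto
    finally show "h \<in> left_coset mu a H"
      using b'(1) m(1) cl unfolding left_coset_def by (metis image_eqI)
  qed
qed

lemma hom_subgroup_twist_left_coset:
  assumes "hom_group G mu e alpha" and "hom_subgroup H G mu e alpha" and "z \<in> G"
  shows "alpha ` left_coset mu z H = left_coset mu (alpha z) H"
proof -
  have HG: "H \<subseteq> G" and aH: "alpha ` H = H"
    using assms(2) unfolding hom_subgroup_def hom_group_def bij_betw_def by auto
  have hom: "\<forall>g\<in>G. \<forall>k\<in>G. alpha (mu g k) = mu (alpha g) (alpha k)"
    using assms(1) unfolding hom_group_def by auto
  have "alpha ` left_coset mu z H = mu (alpha z) ` (alpha ` H)"
    unfolding left_coset_def image_image using hom assms(3) HG by (auto intro!: image_cong)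
  then show ?thesis using aH unfolding left_coset_def by simp
qed

lemma hom_subgroup_left_coset_twist_eq:
  assumes "hom_group G mu e alpha" and "hom_subgroup H G mu e alpha"
    and "z \<in> G" and h: "h \<in> H"
  shows "left_coset mu (alpha z) H = left_coset mu (mu z h) H"
proof -
  have HG: "H \<subseteq> G" and hH: "hom_group H mu e alpha" and aH: "alpha ` H = H"
    using assms(2) unfolding hom_subgroup_def hom_group_def bij_betw_def by auto
  have assoc: "\<forall>g\<in>G. \<forall>h\<in>G. \<forall>k\<in>G. mu (alpha g) (mu h k) = mu (mu g h) (alpha k)"
    using assms(1) unfolding hom_group_def by auto
  have "left_coset mu (alpha z) H = mu (alpha z) ` left_coset mu h H"
    using hom_group_left_coset_self[OF hH h] unfolding left_coset_def by simp
  also have "\<dots> = mu (mu z h) ` (alpha ` H)"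
    unfolding left_coset_def image_image using assoc assms(3) h HG
    by (auto intro!: image_cong)
  finally show ?thesis using aH unfolding left_coset_def by simp
qed

theorem mainTheorem7:
  fixes G H :: "'a set" and mu :: "'a \<Rightarrow> 'a \<Rightarrow> 'a" and e :: 'a and alpha :: "'a \<Rightarrow> 'a"
  assumes "hom_group G mu e alpha" and "finite G"
    and "hom_subgroup H G mu e alpha"
    and "x \<in> G" and "y \<in> G"
    and "left_coset mu x H \<inter> left_coset mu y H \<noteq> {}"
  shows "left_coset mu x H = left_coset mu y H"
proof -
  obtain h1 h2 where h: "h1 \<in> H" "h2 \<in> H" "mu x h1 = mu y h2"
    using assms(6) unfolding left_coset_def by auto
  have "alpha ` left_coset mu x H = left_coset mu (mu x h1) H"
    using hom_subgroup_twist_left_coset hom_subgroup_left_coset_twist_eq assms(1,3,4) h(1)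
    by metis
  also have "\<dots> = alpha ` left_coset mu y H"
    using hom_subgroup_twist_left_coset hom_subgroup_left_coset_twist_eq assms(1,3,5) h(2,3)
    by metis
  finally have twisted_eq: "alpha ` left_coset mu x H = alpha ` left_coset mu y H" .
  have "inj_on alpha G" and "H \<subseteq> G" and "\<forall>g\<in>G. \<forall>h\<in>G. mu g h \<in> G"
    using assms(1,3) unfolding hom_group_def hom_subgroup_def bij_betw_def by auto
  then have "left_coset mu x H \<subseteq> G" "left_coset mu y H \<subseteq> G"
    using assms(4,5) unfolding left_coset_def by auto
  then show ?thesis
    using twisted_eq \<open>inj_on alpha G\<close> by (simp add: inj_on_image_eq_iff)
qed

end
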